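(* Let $0<b<1$ and $\varrho\ge0$ a function on $[0,b]$ with $\varrho/\zeta$ non-decreasing and bounded on $[0,b]$. Let $u\in C^{0,1}([0,b])$ and $\lambda\in\mathbb{R}$ satisfy $u'+(\frac1x+\widetilde\varrho)u+\lambda\zeta=0$ a.e. on $(0,b)$ with $u(0)=0$, $u(b)=1$. Then (i) $u(t)\ge t/b$ for all $t\in[0,b]$; (ii) if $\varrho\not\equiv0$ on $[0,b)$, then $u(t)>t/b$ for all $t\in(0,b)$.
   Context: $\zeta(t)=\frac2{1-t^2}$, $\widetilde\varrho(t)=t\zeta(t)+\varrho(t)$. (The function $t\mapsto t/b$ is the solution of the same problem when $\varrho\equiv0$.) *)

theory Defs
  imports "HOL-Analysis.Analysis"
begin

definition zeta :: "real \<Rightarrow> real" where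
  "zeta t = 2 / (1 - t^2)"

definition rho_tilde :: "(real \<Rightarrow> real) \<Rightarrow> real \<Rightarrow> real" where
  "rho_tilde \<rho> t = t * zeta t + \<rho> t"

end

theory Submission
  imports Defs
begin

text \<open>
  For \<open>y t = u t / t\<close> the equation reads \<open>y' = \<zeta>/t \<cdot> (\<mu> - g y)\<close> with \<open>\<mu> = -\<lambda>\<close> and
  \<open>g t = 1 + t \<rho>(t)/\<zeta>(t)\<close>, which is \<open>\<ge> 1\<close> and non-decreasing. Since \<open>u\<close> is Lipschitz with
  \<open>u 0 = 0\<close>, \<open>y\<close> is bounded. This first forces \<open>\<mu> > 0\<close> and then \<open>g y \<ge> \<mu>\<close> everywhere: where
  \<open>g y < \<mu>\<close>, \<open>y\<close> would have to fall like a multiple of \<open>ln t\<close> as \<open>t \<rightarrow> 0\<close>. Hence \<open>y\<close> is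
  non-increasing and \<open>y t \<ge> y b = 1/b\<close>, which is (i). If \<open>y t = 1/b\<close> for some \<open>t < b\<close>, then
  \<open>y\<close> is constant on \<open>[t, b]\<close>, and by a backward Gronwall argument on \<open>(0, t]\<close> as well; the
  equation then makes \<open>t \<rho>(t)/\<zeta>(t)\<close> constant almost everywhere, which boundedness and
  monotonicity of \<open>\<rho>/\<zeta>\<close> only allow for \<open>\<rho> = 0\<close> on \<open>[0, b)\<close>.

  All monotonicity arguments concern Lipschitz functions with derivative information almost
  everywhere; they rest on Lipschitz maps sending null sets to null sets.
\<close>

section \<open>Monotonicity from almost-everywhere derivative signs\<close>

lemma exists_not_in_negligible:
  fixes p q :: real
  assumes "negligible N" "p < q"
  obtains x where "x \<in> {p<..<q}" "x \<notin> N"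
proof -
  have "\<not> {p<..<q} \<subseteq> N"
    using assms negligible_subset negligible_interval(2)[of p q] by auto
  then show ?thesis using that by blast
qed

lemma negligible_lipschitz_image:
  fixes f :: "real \<Rightarrow> real"
  assumes "L-lipschitz_on S f" "negligible N" "N \<subseteq> S"
  shows "negligible (f ` N)"
proof (rule negligible_locally_Lipschitz_image)
  fix x assume x: "x \<in> N"
  show "\<exists>T B. open T \<and> x \<in> T \<and> (\<forall>y\<in>N \<inter> T. norm (f y - f x) \<le> B * norm (y - x))"
    using x assms lipschitz_onD[OF assms(1)] by (intro exI[of _ UNIV] exI[of _ L]) (auto simp: dist_real_def)
qed (use assms in auto)

lemma continuous_descends_while_positive:
  fixes f :: "real \<Rightarrow> real"
  assumes "a \<le> b" and cont: "continuous_on {a..b} f" and "negligible (f ` N)"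
    and deriv: "\<And>x. x \<in> {a<..<b} \<Longrightarrow> x \<notin> N \<Longrightarrow> f x > 0 \<Longrightarrow> \<exists>D<0. (f has_real_derivative D) (at x)"
    and "f b > 0"
  shows "f b \<le> f a"
proof (rule ccontr)
  assume "\<not> f b \<le> f a"
  then have "max (f a) 0 < f b" using \<open>f b > 0\<close> by simp
  then obtain v where v: "v \<in> {max (f a) 0<..<f b}" "v \<notin> f ` N"
    using exists_not_in_negligible assms(3) by blast
  text \<open>The last point of the sublevel set \<open>{f \<le> v}\<close> is a crossing of the level \<open>v\<close>,
    where \<open>f\<close> cannot be decreasing.\<close>
  define S where "S = {x\<in>{a..b}. f x \<le> v}"
  define x0 where "x0 = Sup S"
  have "closed S" unfolding S_def
    by (rule continuous_on_closed_Collect_le[OF cont continuous_on_const]) simp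
  moreover have "a \<in> S" "bdd_above S" using v \<open>a \<le> b\<close> by (auto simp: S_def bdd_above_def)
  ultimately have x0S: "x0 \<in> S" and above: "\<And>x. x \<in> S \<Longrightarrow> x \<le> x0"
    unfolding x0_def using closed_contains_Sup cSup_upper by blast+
  have x0b: "x0 < b" using x0S v by (cases "x0 = b") (auto simp: S_def)
  have fx0: "f x0 = v"
  proof (rule ccontr)
    assume "f x0 \<noteq> v"
    moreover have "continuous_on {x0..b} f" by (rule continuous_on_subset[OF cont]) (use x0S in \<open>auto simp: S_def\<close>)
    ultimately obtain x where "x0 \<le> x" "x \<le> b" "f x = v"
      using IVT'[of f x0 v b] x0b x0S v by (auto simp: S_def)
    then show False using above[of x] x0S \<open>f x0 \<noteq> v\<close> by (force simp: S_def)
  qed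
  have "a < x0" "x0 \<notin> N" "f x0 > 0" using fx0 x0S v by (auto simp: S_def le_less)
  then obtain D where "D < 0" "(f has_real_derivative D) (at x0)" using deriv x0b by (meson greaterThanLessThan_iff)
  then obtain d where d: "d > 0" "\<And>h. h > 0 \<Longrightarrow> h < d \<Longrightarrow> f (x0 + h) < f x0"
    using DERIV_neg_dec_right by blast
  define h where "h = min (d/2) (b - x0)"
  have "h > 0" "h < d" "x0 + h \<le> b" using d x0b by (auto simp: h_def)
  then have "x0 + h \<notin> S" "x0 + h \<in> {a..b}" using above[of "x0 + h"] x0S by (auto simp: S_def)
  then show False using d(2)[of h] \<open>h > 0\<close> \<open>h < d\<close> fx0 by (auto simp: S_def)
qed

lemma lipschitz_descends_while_positive:
  fixes f :: "real \<Rightarrow> real"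
  assumes "a \<le> b" and lip: "\<exists>L. L-lipschitz_on {a..b} f" and "negligible N"
    and deriv: "\<And>x. x \<in> {a<..<b} \<Longrightarrow> x \<notin> N \<Longrightarrow> f x > 0 \<Longrightarrow> \<exists>D\<le>0. (f has_real_derivative D) (at x)"
    and "f b > 0"
  shows "f b \<le> f a"
proof (rule ccontr)
  assume "\<not> f b \<le> f a"
  then have "a < b" using \<open>a \<le> b\<close> by (cases "a = b") auto
  text \<open>Tilt \<open>f\<close> by a slope \<open>e\<close> small enough that it still rises and stays positive at \<open>b\<close>.\<close>
  define e where "e = min (f b - f a) (f b) / (2 * (b - a))"
  define g where "g x = f x - e * (x - a)" for x
  have "e > 0" using \<open>\<not> f b \<le> f a\<close> \<open>f b > 0\<close> \<open>a < b\<close> by (simp add: e_def)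
  have slope: "e * (b - a) = min (f b - f a) (f b) / 2" using \<open>a < b\<close> by (simp add: e_def field_simps)
  obtain L where L: "L-lipschitz_on {a..b} f" using lip by blast
  then have g_lip: "(L + e * (1 + 0))-lipschitz_on {a..b} g"
    unfolding g_def using \<open>e > 0\<close>
    by (intro lipschitz_on_diff lipschitz_on_cmult_real_nonneg lipschitz_on_id lipschitz_on_constant) auto
  have "g b \<le> g a"
  proof (rule continuous_descends_while_positive[where f = g and N = "N \<inter> {a..b}"])
    show "continuous_on {a..b} g" using g_lip by (rule lipschitz_on_continuous_on)
    show "negligible (g ` (N \<inter> {a..b}))"
      using g_lip \<open>negligible N\<close> negligible_subset
      by (blast intro: negligible_lipschitz_image)
    show "g b > 0" using slope \<open>f b > 0\<close> by (simp add: g_def)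
    fix x assume x: "x \<in> {a<..<b}" "x \<notin> N \<inter> {a..b}" "g x > 0"
    then have "f x > 0" using \<open>e > 0\<close> by (simp add: g_def) (smt (verit) mult_pos_pos)
    then obtain D where "D \<le> 0" "(f has_real_derivative D) (at x)" using deriv x by auto
    then show "\<exists>D<0. (g has_real_derivative D) (at x)"
      using \<open>e > 0\<close> unfolding g_def by (intro exI[of _ "D - e"]) (auto intro!: derivative_eq_intros)
  qed (use \<open>a \<le> b\<close> in auto)
  then show False using slope \<open>\<not> f b \<le> f a\<close> min.cobounded1[of "f b - f a" "f b"] by (simp add: g_def)
qed

lemma lipschitz_mono_if_deriv_nonneg_ae:
  fixes f :: "real \<Rightarrow> real"
  assumes "a \<le> b" and lip: "\<exists>L. L-lipschitz_on {a..b} f" and "negligible N"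
    and deriv: "\<And>x. x \<in> {a<..<b} \<Longrightarrow> x \<notin> N \<Longrightarrow> \<exists>D\<ge>0. (f has_real_derivative D) (at x)"
  shows "f a \<le> f b"
proof -
  define h where "h x = f b - f x + 1" for x
  have "h b \<le> h a"
  proof (rule lipschitz_descends_while_positive[OF \<open>a \<le> b\<close> _ \<open>negligible N\<close>])
    obtain L where "L-lipschitz_on {a..b} f" using lip by blast
    then show "\<exists>L. L-lipschitz_on {a..b} h"
      by (auto simp: lipschitz_on_def h_def dist_real_def abs_minus_commute)
    fix x assume "x \<in> {a<..<b}" "x \<notin> N"
    then obtain D where "D \<ge> 0" "(f has_real_derivative D) (at x)" using deriv by blast
    then show "\<exists>D\<le>0. (h has_real_derivative D) (at x)"
      unfolding h_def by (intro exI[of _ "- D"]) (auto intro!: derivative_eq_intros)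
  qed (simp add: h_def)
  then show ?thesis by (simp add: h_def)
qed

lemma lipschitz_on_mult:
  fixes f g :: "'a::metric_space \<Rightarrow> real"
  assumes "compact S" "Lf-lipschitz_on S f" "Lg-lipschitz_on S g"
  shows "\<exists>L. L-lipschitz_on S (\<lambda>x. f x * g x)"
proof -
  have "bounded (f ` S)" "bounded (g ` S)"
    using assms by (auto intro!: compact_imp_bounded compact_continuous_image lipschitz_on_continuous_on)
  then obtain A B where A: "\<And>x. x \<in> S \<Longrightarrow> \<bar>f x\<bar> \<le> A" and B: "\<And>x. x \<in> S \<Longrightarrow> \<bar>g x\<bar> \<le> B"
    unfolding bounded_iff by (metis imageI real_norm_def)
  have "dist (f x * g x) (f y * g y) \<le> (\<bar>A\<bar> * Lg + \<bar>B\<bar> * Lf) * dist x y" if "x \<in> S" "y \<in> S" for x y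
  proof -
    have "f x * g x - f y * g y = f x * (g x - g y) + g y * (f x - f y)" by algebra
    then have "\<bar>f x * g x - f y * g y\<bar> \<le> \<bar>f x\<bar> * \<bar>g x - g y\<bar> + \<bar>g y\<bar> * \<bar>f x - f y\<bar>"
      by (metis abs_mult abs_triangle_ineq)
    also have "\<dots> \<le> \<bar>A\<bar> * (Lg * dist x y) + \<bar>B\<bar> * (Lf * dist x y)"
      using that A B lipschitz_onD[OF assms(2)] lipschitz_onD[OF assms(3)]
      by (intro add_mono mult_mono) (auto simp: dist_real_def intro: order_trans[OF _ abs_ge_self])
    finally show ?thesis by (simp add: dist_real_def algebra_simps)
  qed
  moreover have "0 \<le> Lf" "0 \<le> Lg" using assms(2,3) lipschitz_on_nonneg by blast+
  ultimately show ?thesis by (intro exI[of _ "\<bar>A\<bar> * Lg + \<bar>B\<bar> * Lf"] lipschitz_onI) auto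
qed

lemma lipschitz_on_Icc_if_deriv_bounded:
  fixes f :: "real \<Rightarrow> real"
  assumes "\<And>x. x \<in> {s..t} \<Longrightarrow> (f has_real_derivative f' x) (at x)"
    and "\<And>x. x \<in> {s..t} \<Longrightarrow> \<bar>f' x\<bar> \<le> B"
  shows "\<exists>L. L-lipschitz_on {s..t} f"
proof (intro exI lipschitz_onI)
  fix x y assume "x \<in> {s..t}" "y \<in> {s..t}"
  then show "dist (f x) (f y) \<le> max B 0 * dist x y"
    using field_differentiable_bound[of "{s..t}" f f' "max B 0" x y] assms
    by (force simp: dist_real_def has_field_derivative_at_within)
qed simp

lemma lipschitz_on_inverse:
  fixes s t :: real
  assumes "0 < s"
  shows "\<exists>L. L-lipschitz_on {s..t} (\<lambda>x. 1 / x)"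
proof (rule lipschitz_on_Icc_if_deriv_bounded[where f' = "\<lambda>x. - 1 / x^2" and B = "1 / s^2"])
  fix x assume x: "x \<in> {s..t}"
  then show "((\<lambda>x. 1 / x) has_real_derivative - 1 / x^2) (at x)"
    using assms by (auto intro!: derivative_eq_intros simp: power2_eq_square)
  have "s^2 \<le> x^2" using x assms by (intro power_mono) auto
  then show "\<bar>- 1 / x^2\<bar> \<le> 1 / s^2" using assms by (simp add: divide_simps)
qed

lemma lipschitz_on_ln:
  fixes s t :: real
  assumes "0 < s"
  shows "\<exists>L. L-lipschitz_on {s..t} ln"
  using assms
  by (intro lipschitz_on_Icc_if_deriv_bounded[where f' = "\<lambda>x. 1 / x" and B = "1 / s"])
     (auto intro!: derivative_eq_intros simp: divide_simps)

lemma lipschitz_on_exp_scaled: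
  fixes s t K :: real
  assumes "0 \<le> K"
  shows "\<exists>L. L-lipschitz_on {s..t} (\<lambda>x. exp (K * x))"
  using assms
  by (intro lipschitz_on_Icc_if_deriv_bounded[where f' = "\<lambda>x. K * exp (K * x)" and B = "K * exp (K * t)"])
     (auto intro!: derivative_eq_intros mult_left_mono)

lemma lipschitz_descent_from_log_rate:
  fixes y :: "real \<Rightarrow> real"
  assumes "0 < s" "s \<le> t" and lip: "\<exists>L. L-lipschitz_on {s..t} y" and "negligible N"
    and "0 \<le> \<delta>" "y t < v"
    and deriv: "\<And>x. x \<in> {s<..<t} \<Longrightarrow> x \<notin> N \<Longrightarrow> y x < v \<Longrightarrow>
                  \<exists>D\<ge>\<delta> / x. (y has_real_derivative D) (at x)"
  shows "y s \<le> y t - \<delta> * (ln t - ln s)"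
proof -
  define f where "f x = v - y x - \<delta> * (ln t - ln x)" for x
  have "f t \<le> f s"
  proof (rule lipschitz_descends_while_positive[where f = f, OF \<open>s \<le> t\<close> _ \<open>negligible N\<close>])
    obtain Ly Lln where Ly: "Ly-lipschitz_on {s..t} y" and Lln: "Lln-lipschitz_on {s..t} ln"
      using lip lipschitz_on_ln[OF \<open>0 < s\<close>] by blast
    show "\<exists>L. L-lipschitz_on {s..t} f"
      unfolding f_def
      by (rule exI, rule lipschitz_on_diff[OF lipschitz_on_diff[OF lipschitz_on_constant Ly]
            lipschitz_on_cmult_real_nonneg[OF lipschitz_on_diff[OF lipschitz_on_constant Lln] \<open>0 \<le> \<delta>\<close>]])
    show "f t > 0" using \<open>y t < v\<close> by (simp add: f_def)
    fix x assume x: "x \<in> {s<..<t}" "x \<notin> N" "f x > 0"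
    then have "0 \<le> \<delta> * (ln t - ln x)" using \<open>0 < s\<close> \<open>0 \<le> \<delta>\<close> by simp
    then have "y x < v" using x(3) by (simp add: f_def)
    then obtain D where "D \<ge> \<delta> / x" "(y has_real_derivative D) (at x)" using deriv x by blast
    then show "\<exists>D\<le>0. (f has_real_derivative D) (at x)"
      using x \<open>0 < s\<close> unfolding f_def
      by (intro exI[of _ "- D + \<delta> / x"]) (auto intro!: derivative_eq_intros simp: field_simps)
  qed
  then show ?thesis by (simp add: f_def)
qed

lemma lipschitz_backward_gronwall:
  fixes y :: "real \<Rightarrow> real"
  assumes "s \<le> t" and lip: "\<exists>L. L-lipschitz_on {s..t} y" and "negligible N"
    and "0 \<le> K" "y t \<le> c"
    and deriv: "\<And>x. x \<in> {s<..<t} \<Longrightarrow> x \<notin> N \<Longrightarrow>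
                  \<exists>D\<ge>- K * (y x - c). (y has_real_derivative D) (at x)"
  shows "y s \<le> c"
proof -
  define F where "F x = (y x - c) * exp (K * x)" for x
  have "F s \<le> F t"
  proof (rule lipschitz_mono_if_deriv_nonneg_ae[where f = F, OF \<open>s \<le> t\<close> _ \<open>negligible N\<close>])
    obtain Ly Lexp where Ly: "Ly-lipschitz_on {s..t} y"
      and Lexp: "Lexp-lipschitz_on {s..t} (\<lambda>x. exp (K * x))"
      using lip lipschitz_on_exp_scaled[OF \<open>0 \<le> K\<close>] by blast
    show "\<exists>L. L-lipschitz_on {s..t} F"
      unfolding F_def by (rule lipschitz_on_mult[OF compact_Icc lipschitz_on_diff[OF Ly lipschitz_on_constant] Lexp])
    fix x assume "x \<in> {s<..<t}" "x \<notin> N"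
    then obtain D where "D \<ge> - K * (y x - c)" "(y has_real_derivative D) (at x)" using deriv by blast
    moreover have "0 \<le> exp (K * x) * (D + K * (y x - c))" using \<open>D \<ge> - K * (y x - c)\<close> by simp
    ultimately show "\<exists>D\<ge>0. (F has_real_derivative D) (at x)"
      unfolding F_def by (intro exI[of _ "exp (K * x) * (D + K * (y x - c))"])
        (auto intro!: derivative_eq_intros simp: algebra_simps)
  qed
  also have "F t \<le> 0" using \<open>y t \<le> c\<close> by (simp add: F_def mult_le_0_iff)
  finally show ?thesis by (simp add: F_def mult_le_0_iff)
qed

section \<open>The equation for \<open>u t / t\<close>\<close>

lemma zeta_ge_two:
  assumes "\<bar>x\<bar> < 1"
  shows "2 \<le> zeta x"
proof -
  have "0 < 1 - x^2" "1 - x^2 \<le> 1" using assms by (auto simp: abs_square_less_1)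
  then show ?thesis by (simp add: zeta_def field_simps)
qed

lemma zeta_mono:
  assumes "0 \<le> x" "x \<le> b" "b < 1"
  shows "zeta x \<le> zeta b"
proof -
  have "x^2 \<le> b^2" "b^2 < 1" using assms by (auto intro: power_mono simp: abs_square_less_1)
  then show ?thesis unfolding zeta_def by (intro divide_left_mono mult_pos_pos) auto
qed

lemma zeta_identity:
  assumes "x^2 \<noteq> 1"
  shows "x^2 * zeta x + 2 = zeta x"
  using assms by (simp add: zeta_def field_simps)

lemma scaled_solution_has_derivative:
  fixes u \<rho> :: "real \<Rightarrow> real"
  assumes "0 < x" "x < 1"
    and "(u has_real_derivative - ((1 / x + rho_tilde \<rho> x) * u x + lam * zeta x)) (at x)"
  shows "((\<lambda>t. u t / t) has_real_derivative
           zeta x / x * (- lam - (1 + x * (\<rho> x / zeta x)) * (u x / x))) (at x)"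
proof -
  have "zeta x \<noteq> 0" using zeta_ge_two[of x] assms by auto
  have "x^2 * zeta x + 2 = zeta x" using assms abs_square_less_1[of x] by (intro zeta_identity) auto
  have "((\<lambda>t. u t / t) has_real_derivative
          (- ((1 / x + rho_tilde \<rho> x) * u x + lam * zeta x) * x - u x * 1) / (x * x)) (at x)"
    using assms by (intro DERIV_divide DERIV_ident) auto
  moreover have "(- ((1 / x + rho_tilde \<rho> x) * u x + lam * zeta x) * x - u x * 1) / (x * x)
      = zeta x / x * (- lam - (1 + x * (\<rho> x / zeta x)) * (u x / x))"
    using \<open>0 < x\<close> \<open>zeta x \<noteq> 0\<close> \<open>x^2 * zeta x + 2 = zeta x\<close> unfolding rho_tilde_def
    by (simp add: field_simps power2_eq_square) algebra
  ultimately show ?thesis by simp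
qed

locale scaled_equation =
  fixes b \<mu> :: real and g y :: "real \<Rightarrow> real" and N :: "real set"
  assumes b: "0 < b" "b < 1"
    and negligible_N: "negligible N"
    and y_lipschitz: "\<And>s. 0 < s \<Longrightarrow> \<exists>L. L-lipschitz_on {s..b} y"
    and y_bounded: "bounded (y ` {0<..b})"
    and y_b_pos: "0 < y b"
    and g_ge_one: "\<And>x. x \<in> {0..b} \<Longrightarrow> 1 \<le> g x"
    and g_mono: "mono_on {0..b} g"
    and y_deriv: "\<And>x. x \<in> {0<..<b} \<Longrightarrow> x \<notin> N \<Longrightarrow>
                    (y has_real_derivative zeta x / x * (\<mu> - g x * y x)) (at x)"
begin

lemma y_lipschitz_on:
  assumes "0 < s" "t \<le> b"
  shows "\<exists>L. L-lipschitz_on {s..t} y"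
  using y_lipschitz[OF \<open>0 < s\<close>] lipschitz_on_subset \<open>t \<le> b\<close> by (metis atLeastatMost_subset_iff order_refl)

lemma y_abs_bound:
  obtains L where "\<And>x. x \<in> {0<..b} \<Longrightarrow> \<bar>y x\<bar> \<le> L"
  using y_bounded unfolding bounded_iff by (metis imageI real_norm_def)

lemma zeta_pos: "x \<in> {0..b} \<Longrightarrow> 0 < zeta x"
  using zeta_ge_two[of x] b by auto

lemma sq_times_y_le_if_mu_nonpos:
  assumes "\<mu> \<le> 0" "0 < s" "s \<le> b"
  shows "b * b * y b \<le> s * s * y s"
proof -
  text \<open>Without a positive source term, \<open>x\<^sup>2 y\<close> cannot grow where it is positive.\<close>
  define w where "w x = x * x * y x" for x
  have "w b \<le> w s"
  proof (rule lipschitz_descends_while_positive[where f = w, OF \<open>s \<le> b\<close> _ negligible_N])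
    obtain Lsq Ly where "Lsq-lipschitz_on {s..b} (\<lambda>x. x * x)" "Ly-lipschitz_on {s..b} y"
      using lipschitz_on_mult[OF compact_Icc lipschitz_on_id lipschitz_on_id] y_lipschitz[OF \<open>0 < s\<close>]
      by blast
    then show "\<exists>L. L-lipschitz_on {s..b} w"
      unfolding w_def by (rule lipschitz_on_mult[OF compact_Icc])
    show "0 < w b" using b y_b_pos by (simp add: w_def)
    fix x assume x: "x \<in> {s<..<b}" "x \<notin> N" "0 < w x"
    then have "0 < x" "0 < y x" using assms by (auto simp: w_def zero_less_mult_iff)
    have "2 \<le> zeta x * g x"
      using mult_mono[of 2 "zeta x" 1 "g x"] zeta_ge_two[of x] g_ge_one[of x] x assms b by auto
    then have "y x * (2 - zeta x * g x) \<le> 0" using \<open>0 < y x\<close> by (simp add: mult_nonneg_nonpos)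
    moreover have "zeta x * \<mu> \<le> 0" using \<open>\<mu> \<le> 0\<close> zeta_pos[of x] x assms by (simp add: mult_nonneg_nonpos)
    ultimately have "x * (zeta x * \<mu> + y x * (2 - zeta x * g x)) \<le> 0"
      using \<open>0 < x\<close> by (simp add: mult_nonneg_nonpos)
    moreover have "(w has_real_derivative (x + x) * y x + x * x * (zeta x / x * (\<mu> - g x * y x))) (at x)"
      unfolding w_def using y_deriv[of x] x assms by (auto intro!: derivative_eq_intros)
    moreover have "(x + x) * y x + x * x * (zeta x / x * (\<mu> - g x * y x))
        = x * (zeta x * \<mu> + y x * (2 - zeta x * g x))"
      using \<open>0 < x\<close> by (simp add: field_simps)
    ultimately show "\<exists>D\<le>0. (w has_real_derivative D) (at x)" by auto
  qed
  then show ?thesis by (simp add: w_def)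
qed

lemma mu_pos: "0 < \<mu>"
proof (rule ccontr)
  assume "\<not> 0 < \<mu>"
  obtain L where L: "\<And>x. x \<in> {0<..b} \<Longrightarrow> \<bar>y x\<bar> \<le> L" using y_abs_bound by blast
  have "y b \<le> L" using L[of b] b by auto
  define s where "s = b * y b / (L + 1)"
  define q where "q = y b * L / ((L + 1) * (L + 1))"
  have "0 < L + 1" "b * y b \<le> b * (L + 1)" using b \<open>y b \<le> L\<close> y_b_pos by (auto intro: mult_left_mono)
  then have s: "0 < s" "s \<le> b" using b y_b_pos by (auto simp: s_def pos_divide_le_eq)
  have "y b * L \<le> L * L" using \<open>y b \<le> L\<close> y_b_pos by (intro mult_right_mono) auto
  moreover have "(L + 1) * (L + 1) = L * L + 2 * L + 1" by algebra
  ultimately have "y b * L < (L + 1) * (L + 1)" using \<open>y b \<le> L\<close> y_b_pos by linarith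
  then have "q < 1" using \<open>0 < L + 1\<close> by (simp add: q_def pos_divide_less_eq)
  have "b * b * y b \<le> s * s * y s" using sq_times_y_le_if_mu_nonpos \<open>\<not> 0 < \<mu>\<close> s by simp
  also have "\<dots> \<le> s * s * L" using L[of s] s by (auto intro!: mult_left_mono)
  also have "\<dots> = b * b * y b * q" by (simp add: s_def q_def)
  also have "\<dots> < b * b * y b * 1" using \<open>q < 1\<close> b y_b_pos by (intro mult_strict_left_mono) auto
  finally show False by simp
qed

lemma g_times_y_le_level:
  assumes "0 < x" "x \<le> t" "t \<le> b" "y x < v"
  shows "g x * y x \<le> g t * max v 0"
proof (cases "0 \<le> y x")
  case True
  have "g x \<le> g t" using g_mono assms by (auto intro: mono_onD)
  then have "g x * y x \<le> g t * y x" using True by (rule mult_right_mono)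
  also have "\<dots> \<le> g t * max v 0" using assms g_ge_one[of t] by (intro mult_left_mono) auto
  finally show ?thesis .
next
  case False
  then have "g x * y x \<le> 0" using g_ge_one[of x] assms by (simp add: mult_nonneg_nonpos)
  also have "0 \<le> g t * max v 0" using g_ge_one[of t] assms by simp
  finally show ?thesis .
qed

lemma mu_le_g_times_y:
  assumes "t \<in> {0<..b}"
  shows "\<mu> \<le> g t * y t"
proof (rule ccontr)
  assume "\<not> \<mu> \<le> g t * y t"
  obtain L where L: "\<And>x. x \<in> {0<..b} \<Longrightarrow> \<bar>y x\<bar> \<le> L" using y_abs_bound by blast
  have "1 \<le> g t" using g_ge_one assms by auto
  define \<delta> where "\<delta> = (\<mu> - g t * max (y t) 0) / 2"
  define v where "v = y t + \<delta> / g t"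
  have "0 < \<delta>" using mu_pos \<open>\<not> \<mu> \<le> g t * y t\<close> by (auto simp: \<delta>_def max_def)
  then have "y t < v" using \<open>1 \<le> g t\<close> by (simp add: v_def)
  have "max v 0 \<le> max (y t) 0 + \<delta> / g t" using \<open>0 < \<delta>\<close> \<open>1 \<le> g t\<close> by (auto simp: v_def max_def)
  then have "g t * max v 0 \<le> g t * (max (y t) 0 + \<delta> / g t)" using \<open>1 \<le> g t\<close> by (intro mult_left_mono) auto
  also have "\<dots> = \<mu> - \<delta>" using \<open>1 \<le> g t\<close> by (simp add: \<delta>_def field_simps)
  finally have level: "g t * max v 0 \<le> \<mu> - \<delta>" .
  text \<open>Below the level \<open>v\<close> the equation forces \<open>y' \<ge> 2\<delta>/x\<close>, so \<open>y\<close> would drop like \<open>2\<delta> ln x\<close>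
    towards \<open>0\<close>, contradicting boundedness.\<close>
  define s where "s = t * exp (- (L + 1) / \<delta>)"
  have "0 \<le> L" using L[of t] assms by force
  then have "0 < s" "s \<le> t" using assms \<open>0 < \<delta>\<close> by (auto simp: s_def mult_le_cancel_left1 divide_nonpos_pos)
  have "y s \<le> y t - 2 * \<delta> * (ln t - ln s)"
  proof (rule lipschitz_descent_from_log_rate[where y = y, OF \<open>0 < s\<close> \<open>s \<le> t\<close> _ negligible_N _ \<open>y t < v\<close>])
    show "\<exists>L. L-lipschitz_on {s..t} y" using y_lipschitz_on \<open>0 < s\<close> assms by auto
    show "0 \<le> 2 * \<delta>" using \<open>0 < \<delta>\<close> by simp
    fix x assume x: "x \<in> {s<..<t}" "x \<notin> N" "y x < v"
    then have "0 < x" "x < b" using \<open>0 < s\<close> assms by auto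
    have "g x * y x \<le> \<mu> - \<delta>" using g_times_y_le_level[of x t v] level x \<open>0 < x\<close> assms by auto
    then have "2 * \<delta> \<le> zeta x * (\<mu> - g x * y x)"
      using zeta_ge_two[of x] \<open>0 < \<delta>\<close> \<open>0 < x\<close> \<open>x < b\<close> b by (intro mult_mono) auto
    then have "2 * \<delta> / x \<le> zeta x / x * (\<mu> - g x * y x)" using \<open>0 < x\<close> by (simp add: divide_right_mono)
    then show "\<exists>D\<ge>2 * \<delta> / x. (y has_real_derivative D) (at x)" using y_deriv[of x] x \<open>0 < x\<close> \<open>x < b\<close> by auto
  qed
  moreover have "ln t - ln s = (L + 1) / \<delta>" using assms by (simp add: s_def ln_mult minus_divide_left)
  ultimately have "y s \<le> y t - 2 * (L + 1)" using \<open>0 < \<delta>\<close> by simp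
  then show False using L[of s] L[of t] assms \<open>0 < s\<close> \<open>s \<le> t\<close> by auto
qed

lemma y_antimono:
  assumes "0 < s" "s \<le> t" "t \<le> b"
  shows "y t \<le> y s"
proof -
  have "- y s \<le> - y t"
  proof (rule lipschitz_mono_if_deriv_nonneg_ae[where f = "\<lambda>x. - y x", OF \<open>s \<le> t\<close> _ negligible_N])
    show "\<exists>L. L-lipschitz_on {s..t} (\<lambda>x. - y x)" using y_lipschitz_on assms by simp
    fix x assume x: "x \<in> {s<..<t}" "x \<notin> N"
    then have "zeta x / x * (\<mu> - g x * y x) \<le> 0"
      using mu_le_g_times_y[of x] zeta_pos[of x] assms by (intro mult_nonneg_nonpos) auto
    then show "\<exists>D\<ge>0. ((\<lambda>x. - y x) has_real_derivative D) (at x)"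
      using y_deriv[of x] x assms by (intro exI[of _ "- (zeta x / x * (\<mu> - g x * y x))"]) (auto intro: DERIV_minus)
  qed
  then show ?thesis by simp
qed

lemma g_times_y_eq_mu_where_locally_const:
  assumes "0 \<le> p" "q \<le> b" "x \<in> {p<..<q}" "x \<notin> N" and const: "\<And>z. z \<in> {p<..<q} \<Longrightarrow> y z = c"
  shows "g x * c = \<mu>"
proof -
  have "(y has_real_derivative 0) (at x)"
    by (rule has_field_derivative_transform_within_open[OF DERIV_const[of c "at x"], where S = "{p<..<q}"])
       (use assms in auto)
  moreover have "(y has_real_derivative zeta x / x * (\<mu> - g x * y x)) (at x)" by (rule y_deriv) (use assms in auto)
  ultimately have "zeta x / x * (\<mu> - g x * y x) = 0" using DERIV_unique by blast
  then show ?thesis using zeta_pos[of x] const[of x] assms by auto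
qed

lemma y_deriv_ge_linearised:
  assumes "g x1 * c = \<mu>" "0 < c" "x1 \<le> b" "0 < x" "z \<in> {x<..<x1}" "z \<notin> N" "c \<le> y z"
  shows "\<exists>D\<ge>- (zeta b * g x1 / x) * (y z - c). (y has_real_derivative D) (at z)"
proof -
  have "0 < z" "z < b" using assms by auto
  have "g z \<le> g x1" using assms by (intro mono_onD[OF g_mono]) auto
  then have "g z * y z \<le> g x1 * y z" using assms by (intro mult_right_mono) auto
  then have E: "- (g x1 * (y z - c)) \<le> \<mu> - g z * y z" using \<open>g x1 * c = \<mu>\<close> by (simp add: algebra_simps)
  have P: "0 \<le> g x1 * (y z - c)" using g_ge_one[of x1] assms by (intro mult_nonneg_nonneg) auto
  have A: "0 \<le> zeta z / z" "zeta z / z \<le> zeta b / x"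
    using zeta_pos[of z] zeta_mono[of z b] \<open>0 < z\<close> \<open>z < b\<close> b assms by (auto intro!: frac_le)
  have "- (zeta b * g x1 / x) * (y z - c) = - (zeta b / x * (g x1 * (y z - c)))" by simp
  also have "\<dots> \<le> - (zeta z / z * (g x1 * (y z - c)))" using mult_right_mono[OF A(2) P] by simp
  also have "\<dots> \<le> zeta z / z * (\<mu> - g z * y z)" using mult_left_mono[OF E A(1)] by simp
  finally show ?thesis using y_deriv[of z] assms \<open>0 < z\<close> \<open>z < b\<close> by auto
qed

lemma y_eq_at_b_if_touches:
  assumes "t \<in> {0<..<b}" "y t = y b" "x \<in> {0<..b}"
  shows "y x = y b"
proof -
  define c where "c = y b"
  have right: "y z = c" if "z \<in> {t..b}" for z
  proof -
    have "y z \<le> y t" "y b \<le> y z" using y_antimono[of t z] y_antimono[of z b] that assms by auto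
    then show ?thesis using assms by (simp add: c_def)
  qed
  have "t < b" using assms by simp
  then obtain x1 where x1: "x1 \<in> {t<..<b}" "x1 \<notin> N" using exists_not_in_negligible[OF negligible_N] by blast
  have "g x1 * c = \<mu>" by (rule g_times_y_eq_mu_where_locally_const[of t b]) (use assms x1 right in auto)
  show ?thesis
  proof (cases "t \<le> x")
    case True
    then show ?thesis using right[of x] assms by (simp add: c_def)
  next
    case False
    have "0 < c" using y_b_pos by (simp add: c_def)
    have above: "c \<le> y z" if "z \<in> {0<..b}" for z using y_antimono[of z b] that by (simp add: c_def)
    text \<open>Linearising around the level \<open>c\<close> gives \<open>(y - c)' \<ge> -K (y - c)\<close>, so Gronwall keeps \<open>y = c\<close>.\<close>
    have "y x \<le> c"
    proof (rule lipschitz_backward_gronwall[where y = y and K = "zeta b * g x1 / x", OF _ _ negligible_N])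
      show "x \<le> t" using False by simp
      show "y t \<le> c" using assms by (simp add: c_def)
      show "\<exists>L. L-lipschitz_on {x..t} y" using y_lipschitz_on[of x t] assms by simp
      show "0 \<le> zeta b * g x1 / x" using zeta_pos[of b] g_ge_one[of x1] x1 assms b by auto
      fix z assume "z \<in> {x<..<t}" "z \<notin> N"
      then show "\<exists>D\<ge>- (zeta b * g x1 / x) * (y z - c). (y has_real_derivative D) (at z)"
        using above[of z] x1 assms \<open>0 < c\<close> \<open>g x1 * c = \<mu>\<close> by (intro y_deriv_ge_linearised) auto
    qed
    then show ?thesis using above[of x] assms by (simp add: c_def)
  qed
qed

lemma g_times_y_b_eq_mu_if_touches:
  assumes "t \<in> {0<..<b}" "y t = y b" "x \<in> {0<..<b}" "x \<notin> N"
  shows "g x * y b = \<mu>"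
proof (rule g_times_y_eq_mu_where_locally_const[of 0 b])
  fix z assume "z \<in> {0<..<b}"
  then show "y z = y b" by (intro y_eq_at_b_if_touches[OF assms(1,2)]) simp
qed (use assms in auto)

end

lemma lipschitz_on_quotient:
  fixes u :: "real \<Rightarrow> real"
  assumes "L-lipschitz_on {0..b} u" "0 < s"
  shows "\<exists>K. K-lipschitz_on {s..b} (\<lambda>t. u t / t)"
proof -
  have "L-lipschitz_on {s..b} u" by (rule lipschitz_on_subset[OF assms(1)]) (use \<open>0 < s\<close> in auto)
  moreover obtain Linv where "Linv-lipschitz_on {s..b} (\<lambda>x. 1 / x)"
    using lipschitz_on_inverse[OF \<open>0 < s\<close>] by blast
  ultimately have "\<exists>K. K-lipschitz_on {s..b} (\<lambda>x. u x * (1 / x))" by (rule lipschitz_on_mult[OF compact_Icc])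
  then show ?thesis by simp
qed

lemma bounded_quotient_if_lipschitz_vanishing:
  fixes u :: "real \<Rightarrow> real"
  assumes "L-lipschitz_on {0..b} u" "u 0 = 0"
  shows "bounded ((\<lambda>t. u t / t) ` {0<..b})"
proof -
  have "\<bar>u x\<bar> \<le> L * x" if "x \<in> {0<..b}" for x
    using lipschitz_onD[OF assms(1), of x 0] assms(2) that by (simp add: dist_real_def)
  then show ?thesis unfolding bounded_iff by (intro exI[of _ L]) (auto simp: abs_div pos_divide_le_eq)
qed

lemma scaled_equation_of_solution:
  fixes b :: real and \<rho> u :: "real \<Rightarrow> real" and lam :: real
  assumes b: "0 < b" "b < 1"
    and rho_nonneg: "\<forall>t\<in>{0..b}. \<rho> t \<ge> 0"
    and rho_mono: "mono_on {0..b} (\<lambda>t. \<rho> t / zeta t)"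
    and u_lip: "\<exists>L. L-lipschitz_on {0..b} u"
    and ode: "AE x in lebesgue. x \<in> {0<..<b} \<longrightarrow>
               (u has_real_derivative (- ((1 / x + rho_tilde \<rho> x) * u x + lam * zeta x))) (at x)"
    and u0: "u 0 = 0" and ub: "0 < u b"
  obtains N where "scaled_equation b (- lam) (\<lambda>t. 1 + t * (\<rho> t / zeta t)) (\<lambda>t. u t / t) N"
proof -
  obtain L where L: "L-lipschitz_on {0..b} u" using u_lip by blast
  obtain N where N: "\<And>x. x \<in> space lebesgue - N \<Longrightarrow> x \<in> {0<..<b} \<longrightarrow>
              (u has_real_derivative - ((1 / x + rho_tilde \<rho> x) * u x + lam * zeta x)) (at x)"
    and "N \<in> null_sets lebesgue"
    using AE_E3[OF ode] by blast
  have \<sigma>_nonneg: "0 \<le> \<rho> x / zeta x" if "x \<in> {0..b}" for x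
    using rho_nonneg zeta_ge_two[of x] that b by auto
  show ?thesis
  proof (rule that, unfold_locales)
    show "0 < b" "b < 1" by (fact b)+
    show "negligible N" using \<open>N \<in> null_sets lebesgue\<close> by (simp add: negligible_iff_null_sets)
    show "0 < u b / b" using ub b by simp
    show "bounded ((\<lambda>t. u t / t) ` {0<..b})" using L u0 by (rule bounded_quotient_if_lipschitz_vanishing)
    fix s :: real assume "0 < s"
    show "\<exists>L. L-lipschitz_on {s..b} (\<lambda>t. u t / t)" using L \<open>0 < s\<close> by (rule lipschitz_on_quotient)
  next
    fix x assume "x \<in> {0..b}"
    then have "0 \<le> x * (\<rho> x / zeta x)" using \<sigma>_nonneg by (intro mult_nonneg_nonneg) auto
    then show "1 \<le> 1 + x * (\<rho> x / zeta x)" by linarith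
  next
    show "mono_on {0..b} (\<lambda>t. 1 + t * (\<rho> t / zeta t))"
    proof (intro mono_onI add_left_mono)
      fix r t assume "r \<in> {0..b}" "t \<in> {0..b}" "r \<le> t"
      then show "r * (\<rho> r / zeta r) \<le> t * (\<rho> t / zeta t)"
        using \<sigma>_nonneg mono_onD[OF rho_mono] by (intro mult_mono) auto
    qed
  next
    fix x assume x: "x \<in> {0<..<b}" "x \<notin> N"
    then show "((\<lambda>t. u t / t) has_real_derivative
        zeta x / x * (- lam - (1 + x * (\<rho> x / zeta x)) * (u x / x))) (at x)"
      using N b by (intro scaled_solution_has_derivative) auto
  qed
qed

lemma eq_zero_if_times_bounded_ae:
  fixes \<sigma> :: "real \<Rightarrow> real"
  assumes "negligible N" "0 < b" and bound: "\<And>x. x \<in> {0<..<b} \<Longrightarrow> \<bar>\<sigma> x\<bar> \<le> B"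
    and eq: "\<And>x. x \<in> {0<..<b} \<Longrightarrow> x \<notin> N \<Longrightarrow> x * \<sigma> x = k"
  shows "k = 0"
proof (rule ccontr)
  assume "k \<noteq> 0"
  then have "0 < min b (\<bar>k\<bar> / (\<bar>B\<bar> + 1))" using \<open>0 < b\<close> by simp
  then obtain x where x: "x \<in> {0<..<min b (\<bar>k\<bar> / (\<bar>B\<bar> + 1))}" "x \<notin> N"
    using exists_not_in_negligible[OF \<open>negligible N\<close>] by blast
  then have "\<bar>k\<bar> = x * \<bar>\<sigma> x\<bar>" using eq[of x] by (auto simp: abs_mult)
  also have "\<dots> \<le> x * \<bar>B\<bar>" using bound[of x] x by (intro mult_left_mono) auto
  also have "\<dots> < \<bar>k\<bar>" using x by (simp add: field_simps)
  finally show False by simp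
qed

lemma vanishes_if_times_const_ae:
  fixes \<sigma> :: "real \<Rightarrow> real"
  assumes "negligible N" "0 < b"
    and mono: "mono_on {0..b} \<sigma>" and nonneg: "\<And>x. x \<in> {0..b} \<Longrightarrow> 0 \<le> \<sigma> x"
    and bdd: "bounded (\<sigma> ` {0..b})"
    and eq: "\<And>x. x \<in> {0<..<b} \<Longrightarrow> x \<notin> N \<Longrightarrow> x * \<sigma> x = k"
    and "t \<in> {0..<b}"
  shows "\<sigma> t = 0"
proof -
  obtain B where B: "\<And>x. x \<in> {0..b} \<Longrightarrow> \<bar>\<sigma> x\<bar> \<le> B"
    using bdd unfolding bounded_iff by (metis imageI real_norm_def)
  have "k = 0"
    by (rule eq_zero_if_times_bounded_ae[OF \<open>negligible N\<close> \<open>0 < b\<close>, of \<sigma> B]) (use B eq in auto)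
  have "t < b" using \<open>t \<in> {0..<b}\<close> by simp
  then obtain x where x: "x \<in> {t<..<b}" "x \<notin> N" using exists_not_in_negligible[OF \<open>negligible N\<close>] by blast
  then have "\<sigma> x = 0" using eq[of x] \<open>k = 0\<close> \<open>t \<in> {0..<b}\<close> by auto
  moreover have "\<sigma> t \<le> \<sigma> x" using x \<open>t \<in> {0..<b}\<close> by (intro mono_onD[OF mono]) auto
  ultimately show ?thesis using nonneg[of t] \<open>t \<in> {0..<b}\<close> by auto
qed

theorem mainTheorem16:
  fixes b :: real and \<rho> u :: "real \<Rightarrow> real" and lam :: real
  assumes b: "0 < b" "b < 1"
    and rho_nonneg: "\<forall>t\<in>{0..b}. \<rho> t \<ge> 0"
    and rho_mono: "mono_on {0..b} (\<lambda>t. \<rho> t / zeta t)"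
    and rho_bdd: "bounded ((\<lambda>t. \<rho> t / zeta t) ` {0..b})"
    and u_lip: "\<exists>L. L-lipschitz_on {0..b} u"
    and ode: "AE x in lebesgue. x \<in> {0<..<b} \<longrightarrow>
               (u has_real_derivative (- ((1 / x + rho_tilde \<rho> x) * u x + lam * zeta x))) (at x)"
    and u0: "u 0 = 0" and ub: "u b = 1"
  shows "(\<forall>t\<in>{0..b}. u t \<ge> t / b) \<and>
         ((\<exists>t\<in>{0..<b}. \<rho> t \<noteq> 0) \<longrightarrow> (\<forall>t\<in>{0<..<b}. u t > t / b))"
proof -
  obtain N where "scaled_equation b (- lam) (\<lambda>t. 1 + t * (\<rho> t / zeta t)) (\<lambda>t. u t / t) N"
    using scaled_equation_of_solution[OF b rho_nonneg rho_mono u_lip ode u0] ub by auto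
  then interpret scaled_equation b "- lam" "\<lambda>t. 1 + t * (\<rho> t / zeta t)" "\<lambda>t. u t / t" N .
  have above: "1 / b \<le> u t / t" if "t \<in> {0<..b}" for t
    using y_antimono[of t b] that ub by simp
  have "t / b \<le> u t" if "t \<in> {0..b}" for t
  proof (cases "t = 0")
    case False
    then show ?thesis using above[of t] that by (simp add: divide_le_eq)
  qed (simp add: u0)
  moreover have "t / b < u t" if "\<rho> t0 \<noteq> 0" "t0 \<in> {0..<b}" "t \<in> {0<..<b}" for t t0
  proof (rule ccontr)
    assume "\<not> t / b < u t"
    then have "u t / t \<le> 1 / b" using that by (simp add: divide_le_eq)
    then have "u t / t = u b / b" using above[of t] that ub by simp
    have "x * (\<rho> x / zeta x) = - lam * b - 1" if "x \<in> {0<..<b}" "x \<notin> N" for x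
    proof -
      have "(1 + x * (\<rho> x / zeta x)) * (1 / b) = - lam"
        using g_times_y_b_eq_mu_if_touches[OF _ \<open>u t / t = u b / b\<close> that] \<open>t \<in> {0<..<b}\<close> ub by simp
      then show ?thesis using b by (simp add: field_simps)
    qed
    then have "\<rho> t0 / zeta t0 = 0"
      using rho_nonneg zeta_pos that b
      by (intro vanishes_if_times_const_ae[OF negligible_N _ rho_mono _ rho_bdd])
        (auto intro: divide_nonneg_pos)
    then show False using zeta_pos[of t0] that by simp
  qed
  ultimately show ?thesis by auto
qed

end
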